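(* Let $\pi,\rho$ be probability distributions on $\Sigma^n=\{0,1\}^n$ with fidelity $F(\pi,\rho)=\sum_{x}\sqrt{\pi_x\rho_x}\ge1-\delta$, and let $t>4$. Let $M_t(\pi,\rho)=\{x\in\Sigma^n:\pi_x>0,\ \rho_x>0,\ t^{-1}\le\pi_x/\rho_x\le t\}$ be the set of $t$-balanced strings. Then $$\sum_{x\in M_t(\pi,\rho)}\pi_x\ge1-\frac{2\delta}{1-2t^{-1/2}}.$$ *)

theory Defs
  imports "HOL-Analysis.Analysis"
begin

definition cube :: "nat \<Rightarrow> bool list set" where
  "cube n = {x. length x = n}"

definition is_distr :: "nat \<Rightarrow> (bool list \<Rightarrow> real) \<Rightarrow> bool" where
  "is_distr n p \<longleftrightarrow> (\<forall>x\<in>cube n. p x \<ge> 0) \<and> (\<Sum>x\<in>cube n. p x) = 1"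

definition fidelity :: "nat \<Rightarrow> (bool list \<Rightarrow> real) \<Rightarrow> (bool list \<Rightarrow> real) \<Rightarrow> real" where
  "fidelity n p r = (\<Sum>x\<in>cube n. sqrt (p x * r x))"

definition balanced_set :: "nat \<Rightarrow> real \<Rightarrow> (bool list \<Rightarrow> real) \<Rightarrow> (bool list \<Rightarrow> real) \<Rightarrow> bool list set" where
  "balanced_set n t p r = {x\<in>cube n. p x > 0 \<and> r x > 0 \<and> inverse t \<le> p x / r x \<and> p x / r x \<le> t}"

end

theory Submission
  imports Defs
begin

text \<open>
  Split the fidelity sum along \<open>M = M\<^sub>t(\<pi>,\<rho>)\<close>. On \<open>M\<close> use the AM-GM bound
  \<open>\<surd>(\<pi>\<^sub>x\<rho>\<^sub>x) \<le> (\<pi>\<^sub>x+\<rho>\<^sub>x)/2\<close>; off \<open>M\<close> one of \<open>\<pi>\<^sub>x, \<rho>\<^sub>x\<close> is at most \<open>1/t\<close> times the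
  other, which gives the sharper bound \<open>\<surd>(\<pi>\<^sub>x\<rho>\<^sub>x) \<le> t\<^sup>-\<^sup>1\<^sup>/\<^sup>2 (\<pi>\<^sub>x+\<rho>\<^sub>x)\<close>. Summing, the fidelity
  is at most \<open>1 - (1/2 - t\<^sup>-\<^sup>1\<^sup>/\<^sup>2)(\<pi>(M\<^sup>c) + \<rho>(M\<^sup>c))\<close>, so \<open>\<pi>(M\<^sup>c) \<le> 2\<delta>/(1 - 2t\<^sup>-\<^sup>1\<^sup>/\<^sup>2)\<close>.
\<close>

lemma finite_cube: "finite (cube n)"
  using finite_lists_length_eq[of "UNIV :: bool set" n] by (simp add: cube_def)

lemma sqrt_mult_le_if_dominated:
  fixes p r t :: real
  assumes "p \<ge> 0" "r \<ge> 0" "t > 0" "t * p \<le> r"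
  shows "sqrt (p * r) \<le> r / sqrt t"
proof -
  have "p * r \<le> (r / t) * r"
    using assms by (intro mult_right_mono) (auto simp: field_simps)
  also have "\<dots> = (r / sqrt t)\<^sup>2"
    using assms(3) by (simp add: power2_eq_square power_divide)
  finally show ?thesis
    using assms(2,3) by (simp add: real_le_lsqrt)
qed

lemma sqrt_mult_le_if_unbalanced:
  fixes p r t :: real
  assumes "p \<ge> 0" "r \<ge> 0" "t > 0"
    and "\<not> (p > 0 \<and> r > 0 \<and> inverse t \<le> p / r \<and> p / r \<le> t)"
  shows "sqrt (p * r) \<le> (p + r) / sqrt t"
proof -
  have "t * p \<le> r \<or> t * r \<le> p"
    using assms by (cases "p = 0 \<or> r = 0") (auto simp: field_simps not_le)
  then have "sqrt (p * r) \<le> r / sqrt t \<or> sqrt (p * r) \<le> p / sqrt t"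
    using sqrt_mult_le_if_dominated[of p r t] sqrt_mult_le_if_dominated[of r p t] assms
    by (auto simp: mult.commute)
  moreover have "r / sqrt t \<le> (p + r) / sqrt t" "p / sqrt t \<le> (p + r) / sqrt t"
    using assms(1-3) by (simp_all add: divide_right_mono)
  ultimately show ?thesis by linarith
qed

lemma affinity_le_one_minus_mass_outside:
  fixes p r :: "'a \<Rightarrow> real" and s :: real
  assumes "finite A" "M \<subseteq> A"
    and "\<And>x. x \<in> A \<Longrightarrow> p x \<ge> 0" "\<And>x. x \<in> A \<Longrightarrow> r x \<ge> 0"
    and "sum p A = 1" "sum r A = 1"
    and "\<And>x. x \<in> A - M \<Longrightarrow> sqrt (p x * r x) \<le> s * (p x + r x)"
  shows "(\<Sum>x\<in>A. sqrt (p x * r x)) \<le> 1 - (1/2 - s) * (sum p (A - M) + sum r (A - M))"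
proof -
  have sum_M: "sum f M = sum f A - sum f (A - M)" for f :: "'a \<Rightarrow> real"
    using assms(1,2) by (simp add: sum_diff)
  have "(\<Sum>x\<in>A. sqrt (p x * r x))
      \<le> (\<Sum>x\<in>M. (p x + r x) / 2) + (\<Sum>x\<in>A - M. s * (p x + r x))"
    unfolding sum.subset_diff[OF assms(2,1)] add.commute[of "sum _ (A - M)"]
    using assms(2-4,7) arith_geo_mean_sqrt
    by (intro add_mono sum_mono) (auto simp: subset_iff)
  also have "\<dots> = (sum p M + sum r M) / 2 + s * (sum p (A - M) + sum r (A - M))"
    by (simp add: sum.distrib sum_divide_distrib[symmetric] sum_distrib_left[symmetric])
  also have "\<dots> = 1 - (1/2 - s) * (sum p (A - M) + sum r (A - M))"
    using assms(5,6) by (simp add: sum_M field_simps)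
  finally show ?thesis .
qed

lemma mass_le_of_affinity_ge:
  fixes p r :: "'a \<Rightarrow> real" and s \<delta> :: real
  assumes "finite A" "M \<subseteq> A"
    and "\<And>x. x \<in> A \<Longrightarrow> p x \<ge> 0" "\<And>x. x \<in> A \<Longrightarrow> r x \<ge> 0"
    and "sum p A = 1" "sum r A = 1"
    and "\<And>x. x \<in> A - M \<Longrightarrow> sqrt (p x * r x) \<le> s * (p x + r x)"
    and "s < 1/2" "(\<Sum>x\<in>A. sqrt (p x * r x)) \<ge> 1 - \<delta>"
  shows "sum p M \<ge> 1 - 2 * \<delta> / (1 - 2 * s)"
proof -
  let ?P = "sum p (A - M)" and ?R = "sum r (A - M)"
  have "(1 - 2 * s) * (?P + ?R) \<le> 2 * \<delta>"
    using affinity_le_one_minus_mass_outside[OF assms(1-7)] assms(9) by (simp add: algebra_simps)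
  moreover have "(1 - 2 * s) * ?P \<le> (1 - 2 * s) * (?P + ?R)"
    using assms(4,8) by (intro mult_left_mono) (auto intro: sum_nonneg)
  ultimately have "(1 - 2 * s) * ?P \<le> 2 * \<delta>" by linarith
  then have "?P \<le> 2 * \<delta> / (1 - 2 * s)"
    using assms(8) by (simp add: pos_le_divide_eq mult.commute)
  moreover have "sum p M + ?P = 1"
    using assms(1,2,5) by (metis sum.subset_diff add.commute)
  ultimately show ?thesis by linarith
qed

theorem lemma5p4:
  fixes n :: nat and p r :: "bool list \<Rightarrow> real" and \<delta> t :: real
  assumes "is_distr n p" and "is_distr n r"
    and "fidelity n p r \<ge> 1 - \<delta>"
    and "t > 4"
  shows "(\<Sum>x\<in>balanced_set n t p r. p x) \<ge> 1 - 2 * \<delta> / (1 - 2 * t powr (-1/2))"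
proof -
  have t_pos: "t > 0" using assms(4) by simp
  have s_eq: "t powr (-1/2) = inverse (sqrt t)"
    using t_pos by (simp add: powr_minus powr_half_sqrt)
  have "inverse (sqrt t) < inverse 2"
    using assms(4) real_less_rsqrt[of 2 t] by (intro less_imp_inverse_less) auto
  then have s_small: "t powr (-1/2) < 1/2"
    unfolding s_eq by simp
  have p_nonneg: "\<And>x. x \<in> cube n \<Longrightarrow> p x \<ge> 0" and r_nonneg: "\<And>x. x \<in> cube n \<Longrightarrow> r x \<ge> 0"
    using assms(1,2) by (auto simp: is_distr_def)
  have unbalanced: "sqrt (p x * r x) \<le> t powr (-1/2) * (p x + r x)"
    if "x \<in> cube n - balanced_set n t p r" for x
  proof -
    have "sqrt (p x * r x) \<le> (p x + r x) / sqrt t"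
      using that p_nonneg r_nonneg t_pos
      by (intro sqrt_mult_le_if_unbalanced) (auto simp: balanced_set_def)
    then show ?thesis
      unfolding s_eq by (simp add: divide_inverse mult.commute)
  qed
  show ?thesis
    using assms(1-3) s_small
    by (intro mass_le_of_affinity_ge[OF finite_cube _ p_nonneg r_nonneg _ _ unbalanced])
       (auto simp: is_distr_def fidelity_def balanced_set_def)
qed

end
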